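(* Let $i\geq 2$ be an integer and let $D$ be a strong digraph with $D\in\mathcal{LE}_i$. Then $D$ has an independent set of vertices that meets (shares a vertex with) every longest directed path of $D$.
   Context: All digraphs are finite, without loops or multiple arcs. Paths and cycles are directed; the length of a path or cycle is its number of arcs. A set of vertices is independent if no two distinct vertices of it are joined by an arc. A digraph is strong if for every ordered pair of vertices $x,y$ there is a directed path from $x$ to $y$. For a subdigraph $H$ of a digraph $D$, an ear of $H$ in $D$ is either a directed path in $D$ whose two end vertices lie in $H$ and whose internal vertices do not lie in $H$, or a directed cycle in $D$ having exactly one vertex in $H$. An ear decomposition of a strong digraph $D$ is a sequence $(D_0,D_1,\ldots,D_k)$ of strong subdigraphs of $D$ such that $D_0$ is a directed cycle, $D_{j+1}=D_j\cup P_j$ where $P_j$ is an ear of $D_j$ in $D$ for every $j\in\{0,\ldots,k-1\}$, and $D_k=D$. For an integer $i\geq 1$, $\mathcal{LE}_i$ denotes the family of strong digraphs having an ear decomposition in which every ear has length at least $i$. *)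

theory Defs
  imports Main
begin

definition digraph :: "'a set \<Rightarrow> ('a \<times> 'a) set \<Rightarrow> bool" where
  "digraph V A \<longleftrightarrow> finite V \<and> A \<subseteq> V \<times> V \<and> (\<forall>v. (v, v) \<notin> A)"

definition path_arcs :: "'a list \<Rightarrow> ('a \<times> 'a) set" where
  "path_arcs ps = set (zip ps (tl ps))"

definition cycle_arcs :: "'a list \<Rightarrow> ('a \<times> 'a) set" where
  "cycle_arcs ps = path_arcs ps \<union> {(last ps, hd ps)}"

text \<open>A directed path (vertices pairwise distinct); its length is length ps - 1.\<close>
definition is_path :: "'a set \<Rightarrow> ('a \<times> 'a) set \<Rightarrow> 'a list \<Rightarrow> bool" where
  "is_path V A ps \<longleftrightarrow> ps \<noteq> [] \<and> distinct ps \<and> set ps \<subseteq> V \<and> path_arcs ps \<subseteq> A"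

text \<open>A directed cycle v0 -> v1 -> ... -> v(k-1) -> v0; its length is k = length ps.\<close>
definition is_cycle :: "'a set \<Rightarrow> ('a \<times> 'a) set \<Rightarrow> 'a list \<Rightarrow> bool" where
  "is_cycle V A ps \<longleftrightarrow> length ps \<ge> 2 \<and> distinct ps \<and> set ps \<subseteq> V \<and> cycle_arcs ps \<subseteq> A"

definition strong :: "'a set \<Rightarrow> ('a \<times> 'a) set \<Rightarrow> bool" where
  "strong V A \<longleftrightarrow> (\<forall>x\<in>V. \<forall>y\<in>V. \<exists>p. is_path V A p \<and> hd p = x \<and> last p = y)"

definition subdigraph :: "'a set \<Rightarrow> ('a \<times> 'a) set \<Rightarrow> 'a set \<Rightarrow> ('a \<times> 'a) set \<Rightarrow> bool" where
  "subdigraph VH AH V A \<longleftrightarrow> VH \<subseteq> V \<and> AH \<subseteq> A \<and> AH \<subseteq> VH \<times> VH"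

text \<open>An ear is encoded as (ps, closed): closed = False means a path with vertex list ps,
  closed = True means a cycle with vertex list ps.\<close>
definition ear_verts :: "'a list \<times> bool \<Rightarrow> 'a set" where
  "ear_verts e = set (fst e)"

definition ear_arcs :: "'a list \<times> bool \<Rightarrow> ('a \<times> 'a) set" where
  "ear_arcs e = (if snd e then cycle_arcs (fst e) else path_arcs (fst e))"

definition ear_length :: "'a list \<times> bool \<Rightarrow> nat" where
  "ear_length e = (if snd e then length (fst e) else length (fst e) - 1)"

definition is_ear :: "'a set \<Rightarrow> ('a \<times> 'a) set \<Rightarrow> 'a set \<Rightarrow> 'a list \<times> bool \<Rightarrow> bool" where
  "is_ear V A VH e \<longleftrightarrow>
     (if snd e then is_cycle V A (fst e) \<and> card (set (fst e) \<inter> VH) = 1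
      else is_path V A (fst e) \<and> length (fst e) \<ge> 2 \<and> hd (fst e) \<in> VH \<and> last (fst e) \<in> VH
           \<and> (\<forall>k. 0 < k \<and> k < length (fst e) - 1 \<longrightarrow> fst e ! k \<notin> VH))"

text \<open>D = (V, A) belongs to LE_i: it has an ear decomposition (D_0, ..., D_k), given by the
  list Ds, with all ears of length at least i.\<close>
definition in_LE :: "nat \<Rightarrow> 'a set \<Rightarrow> ('a \<times> 'a) set \<Rightarrow> bool" where
  "in_LE i V A \<longleftrightarrow> strong V A \<and>
     (\<exists>Ds :: ('a set \<times> ('a \<times> 'a) set) list. Ds \<noteq> [] \<and>
        (\<forall>j < length Ds. subdigraph (fst (Ds ! j)) (snd (Ds ! j)) V A
                         \<and> strong (fst (Ds ! j)) (snd (Ds ! j))) \<and>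
        (\<exists>c. is_cycle V A c \<and> Ds ! 0 = (set c, cycle_arcs c)) \<and>
        (\<forall>j. Suc j < length Ds \<longrightarrow>
           (\<exists>e. is_ear V A (fst (Ds ! j)) e \<and> ear_length e \<ge> i \<and>
                Ds ! Suc j = (fst (Ds ! j) \<union> ear_verts e, snd (Ds ! j) \<union> ear_arcs e))) \<and>
        last Ds = (V, A))"

definition independent :: "('a \<times> 'a) set \<Rightarrow> 'a set \<Rightarrow> bool" where
  "independent A S \<longleftrightarrow> (\<forall>x\<in>S. \<forall>y\<in>S. x \<noteq> y \<longrightarrow> (x, y) \<notin> A)"

definition longest_path :: "'a set \<Rightarrow> ('a \<times> 'a) set \<Rightarrow> 'a list \<Rightarrow> bool" where
  "longest_path V A p \<longleftrightarrow> is_path V A p \<and> (\<forall>q. is_path V A q \<longrightarrow> length q \<le> length p)"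

end

theory Submission
  imports Defs
begin

(* Induction along the ear decomposition. In the initial cycle every longest path is
   Hamiltonian, so one vertex suffices. When an ear of length at least 2 is added, every
   interior vertex of the ear has a unique in- and out-neighbour, both on the ear; hence a
   longest path through one interior vertex contains the whole ear, while a longest path
   avoiding the interior is a longest path of the previous digraph. So the old independent
   set still works if it meets the ear; otherwise add the first interior vertex of the ear,
   whose only neighbours lie on the ear and hence outside the set. *)

lemma path_arcs_nth:
  "(u, v) \<in> path_arcs w \<longleftrightarrow> (\<exists>k. Suc k < length w \<and> u = w ! k \<and> v = w ! Suc k)"
  unfolding path_arcs_def set_zip by (auto simp: nth_tl less_diff_conv)

lemma path_arcs_singleton [simp]: "path_arcs [x] = {}"
  by (simp add: path_arcs_def)

lemma path_arcs_Cons: "xs \<noteq> [] \<Longrightarrow> path_arcs (x # xs) = insert (x, hd xs) (path_arcs xs)"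
  by (cases xs) (auto simp: path_arcs_def)

lemma path_arcs_snoc: "xs \<noteq> [] \<Longrightarrow> path_arcs (xs @ [y]) = insert (last xs, y) (path_arcs xs)"
  by (induction xs rule: induct_list012) (auto simp: path_arcs_def)

lemma path_arcs_rev: "path_arcs (rev xs) = (path_arcs xs)\<inverse>"
proof (induction xs)
  case (Cons x xs)
  then show ?case
    by (cases "xs = []") (auto simp: path_arcs_snoc path_arcs_Cons last_rev)
qed (simp add: path_arcs_def)

lemma cycle_arcs_rotate: "cycle_arcs (rotate n c) = cycle_arcs c"
proof (induction n)
  case (Suc n)
  have "cycle_arcs (rotate1 c) = cycle_arcs c" for c :: "'a list"
    by (cases c; cases "tl c = []") (auto simp: cycle_arcs_def path_arcs_snoc path_arcs_Cons)
  then show ?case using Suc by simp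
qed simp

lemma is_path_rev: "is_path V (A\<inverse>) (rev p) \<longleftrightarrow> is_path V A p"
  by (auto simp: is_path_def path_arcs_rev)

lemma longest_path_rev: "longest_path V (A\<inverse>) (rev P) \<longleftrightarrow> longest_path V A P"
  unfolding longest_path_def by (metis is_path_rev converse_converse length_rev rev_rev_ident)

lemma longest_path_successor_mem:
  assumes P: "longest_path V A P" and "x \<in> set P" "(x, y) \<in> A" "y \<in> V"
    and unique: "\<And>z. (x, z) \<in> A \<Longrightarrow> z = y"
  shows "y \<in> set P"
proof (rule ccontr)
  assume y: "y \<notin> set P"
  have path: "is_path V A P" using P by (simp add: longest_path_def)
  show False
  proof (cases "x = last P")
    case True
    then have "is_path V A (P @ [y])"
      using path y assms(3,4) by (auto simp: is_path_def path_arcs_snoc)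
    then show False using P by (force simp: longest_path_def)
  next
    case False
    obtain k where k: "k < length P" "P ! k = x" using \<open>x \<in> set P\<close> by (metis in_set_conv_nth)
    with False have "k \<noteq> length P - 1" using path by (auto simp: last_conv_nth is_path_def)
    with k have "Suc k < length P" by linarith
    then have "(x, P ! Suc k) \<in> A" using path k by (force simp: is_path_def path_arcs_nth)
    then show False using unique y \<open>Suc k < length P\<close> by (metis nth_mem)
  qed
qed

lemma longest_path_predecessor_mem:
  assumes "longest_path V A P" "x \<in> set P" "(y, x) \<in> A" "y \<in> V"
    and "\<And>z. (z, x) \<in> A \<Longrightarrow> z = y"
  shows "y \<in> set P"
proof -
  have rev: "longest_path V (A\<inverse>) (rev P)" using assms(1) by (simp add: longest_path_rev)
  have succ: "\<And>z. (x, z) \<in> A\<inverse> \<Longrightarrow> z = y" using assms(5) by blast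
  have "y \<in> set (rev P)"
    by (rule longest_path_successor_mem[OF rev _ _ _ succ]) (use assms(2-4) in simp_all)
  then show ?thesis by simp
qed

lemma longest_path_subgraph:
  assumes "longest_path V A P" "VH \<subseteq> V" "AH \<subseteq> A" "set P \<subseteq> VH" "path_arcs P \<subseteq> AH"
  shows "longest_path VH AH P"
  using assms unfolding longest_path_def is_path_def by (meson subset_trans)

lemma longest_path_of_cycle_spans:
  assumes "distinct c" "c \<noteq> []" "longest_path (set c) (cycle_arcs c) P"
  shows "set P = set c"
proof -
  have "is_path (set c) (cycle_arcs c) c" using assms(1,2) by (auto simp: is_path_def cycle_arcs_def)
  then have "length c \<le> length P" using assms(3) by (simp add: longest_path_def)
  moreover have "distinct P" "set P \<subseteq> set c" using assms(3) by (simp_all add: longest_path_def is_path_def)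
  ultimately show ?thesis
    using assms(1) by (metis card_seteq distinct_card finite_set)
qed

lemma propagate_from_interior:
  fixes Q :: "nat \<Rightarrow> bool"
  assumes "Q k" "0 < k" "Suc k < m"
    and step: "\<And>j. 0 < j \<Longrightarrow> Suc j < m \<Longrightarrow> Q j \<Longrightarrow> Q (j - 1) \<and> Q (Suc j)"
    and "j < m"
  shows "Q j"
proof -
  have up: "Q (k + d)" if "k + d < m" for d
    using that by (induction d) (use assms in \<open>auto dest: step\<close>)
  have down: "Q (k - d)" if "d \<le> k" for d
    using that
  proof (induction d)
    case (Suc d)
    then have "Q (k - d - 1)" using step[of "k - d"] assms(3) by simp
    then show ?case by (simp add: diff_Suc)
  qed (simp add: assms(1))
  show ?thesis
    using up[of "j - k"] down[of "k - j"] \<open>j < m\<close> by (cases "j \<le> k") simp_all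
qed

text \<open>A closed ear is traced from its unique vertex in \<open>VH\<close> back to itself, so its first and
  last entries coincide; hence only \<open>butlast w\<close> is required to be distinct.\<close>

definition ear_walk :: "'a set \<Rightarrow> 'a list \<Rightarrow> bool" where
  "ear_walk VH w \<longleftrightarrow> 3 \<le> length w \<and> hd w \<in> VH \<and> last w \<in> VH \<and> distinct (butlast w) \<and>
     (\<forall>k. 0 < k \<and> Suc k < length w \<longrightarrow> w ! k \<notin> VH)"

lemma ear_walk_of_path_ear:
  assumes "is_ear V A VH (p, False)" "2 \<le> ear_length (p, False)"
  shows "ear_walk VH p"
  using assms by (auto simp: ear_walk_def is_ear_def ear_length_def is_path_def distinct_butlast)

lemma ear_walk_of_cycle_ear:
  assumes "is_ear V A VH (c, True)"
  obtains w where "ear_walk VH w" "set w = set c" "path_arcs w = cycle_arcs c"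
proof -
  have c: "2 \<le> length c" "distinct c" "card (set c \<inter> VH) = 1"
    using assms by (auto simp: is_ear_def is_cycle_def)
  then obtain v where v: "set c \<inter> VH = {v}" by (metis card_1_singletonE)
  then have "v \<in> set c" by blast
  then obtain r where r: "r < length c" "c ! r = v" by (metis in_set_conv_nth)
  define c' where "c' = rotate r c"
  have "c \<noteq> []" using c by auto
  then have c': "distinct c'" "set c' = set c" "length c' = length c" "hd c' = v" "c' \<noteq> []"
    using c r by (simp_all add: c'_def hd_rotate_conv_nth)
  define w where "w = c' @ [v]"
  have interior: "w ! k \<notin> VH" if "0 < k" "Suc k < length w" for k
  proof -
    have "k < length c'" using that by (simp add: w_def)
    then have "w ! k = c' ! k" "c' ! k \<noteq> c' ! 0" "c' ! k \<in> set c"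
      using that(1) c'(1,2,5) nth_eq_iff_index_eq[OF c'(1), of k 0] nth_mem[of k c']
      by (simp_all add: w_def nth_append)
    moreover have "c' ! 0 = v" using c' by (simp add: hd_conv_nth)
    ultimately show ?thesis using v by auto
  qed
  show ?thesis
  proof (rule that)
    have "hd w = v" "last w = v" "v \<in> VH" using c' v by (auto simp: w_def)
    moreover have "3 \<le> length w" "distinct (butlast w)" using c c' by (simp_all add: w_def)
    ultimately show "ear_walk VH w" using interior by (simp add: ear_walk_def)
    have "v \<in> set c'" using c'(4,5) by (metis list.set_sel(1))
    then show "set w = set c" using c'(2) by (simp add: w_def insert_absorb)
    have "path_arcs w = cycle_arcs c'"
      using c' by (auto simp: w_def cycle_arcs_def path_arcs_snoc)
    then show "path_arcs w = cycle_arcs c" by (simp add: c'_def cycle_arcs_rotate)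
  qed
qed

lemma ear_walk_of_ear:
  assumes "is_ear V A VH e" "2 \<le> ear_length e"
  obtains w where "ear_walk VH w" "set w = ear_verts e" "path_arcs w = ear_arcs e"
proof (cases e)
  case (Pair p closed)
  show ?thesis
  proof (cases closed)
    case True
    obtain w where "ear_walk VH w" "set w = set p" "path_arcs w = cycle_arcs p"
      using ear_walk_of_cycle_ear assms(1) Pair True by metis
    then show ?thesis using that Pair True by (simp add: ear_verts_def ear_arcs_def)
  next
    case False
    then show ?thesis
      using ear_walk_of_path_ear[of V A VH p] assms that Pair by (simp add: ear_verts_def ear_arcs_def)
  qed
qed

definition lp_transversal :: "'a set \<Rightarrow> ('a \<times> 'a) set \<Rightarrow> 'a set \<Rightarrow> bool" where
  "lp_transversal V A S \<longleftrightarrow>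
     S \<subseteq> V \<and> independent A S \<and> (\<forall>P. longest_path V A P \<longrightarrow> set P \<inter> S \<noteq> {})"

lemma lp_transversal_cycle:
  assumes "distinct c" "c \<noteq> []"
  shows "lp_transversal (set c) (cycle_arcs c) {hd c}"
  using assms longest_path_of_cycle_spans by (fastforce simp: lp_transversal_def independent_def)

locale ear_extension =
  fixes VH :: "'a set" and AH :: "('a \<times> 'a) set" and w :: "'a list"
  assumes arcs_within: "AH \<subseteq> VH \<times> VH" and walk: "ear_walk VH w"
begin

abbreviation V' :: "'a set" where "V' \<equiv> VH \<union> set w"
abbreviation A' :: "('a \<times> 'a) set" where "A' \<equiv> AH \<union> path_arcs w"

lemma length_walk: "3 \<le> length w"
  using walk by (simp add: ear_walk_def)

lemma first_in: "w ! 0 \<in> VH" and last_in: "w ! (length w - 1) \<in> VH"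
proof -
  have "w \<noteq> []" using length_walk by auto
  then show "w ! 0 \<in> VH" "w ! (length w - 1) \<in> VH"
    using walk by (simp_all add: ear_walk_def hd_conv_nth last_conv_nth)
qed

lemma interior_notin: "0 < k \<Longrightarrow> Suc k < length w \<Longrightarrow> w ! k \<notin> VH"
  using walk by (simp add: ear_walk_def)

lemma index_inj: "Suc k < length w \<Longrightarrow> Suc j < length w \<Longrightarrow> w ! k = w ! j \<Longrightarrow> k = j"
  using walk nth_eq_iff_index_eq[of "butlast w" k j] by (simp add: ear_walk_def nth_butlast)

lemma new_vertex_interior:
  assumes "x \<in> set w" "x \<notin> VH"
  obtains k where "0 < k" "Suc k < length w" "w ! k = x"
proof -
  obtain k where k: "k < length w" "w ! k = x" using assms(1) by (metis in_set_conv_nth)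
  have "0 < k" using k assms(2) first_in by (cases k) auto
  moreover have "k \<noteq> length w - 1" using k assms(2) last_in by auto
  ultimately show ?thesis using that k by (metis Suc_lessI diff_Suc_1)
qed

lemma ear_arc_leaves:
  assumes "(u, v) \<in> path_arcs w"
  shows "u \<notin> VH \<or> v \<notin> VH"
proof -
  obtain k where k: "Suc k < length w" "u = w ! k" "v = w ! Suc k"
    using assms by (auto simp: path_arcs_nth)
  show ?thesis
  proof (cases k)
    case 0
    then show ?thesis using k length_walk interior_notin[of 1] by simp
  next
    case (Suc j)
    then show ?thesis using k interior_notin[of k] by simp
  qed
qed

lemma interior_successor:
  assumes k: "0 < k" "Suc k < length w" and arc: "(w ! k, z) \<in> A'"
  shows "z = w ! Suc k"
proof -
  have "(w ! k, z) \<in> path_arcs w" using arc arcs_within interior_notin[OF k] by auto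
  then obtain j where j: "Suc j < length w" "w ! k = w ! j" "z = w ! Suc j"
    by (auto simp: path_arcs_nth)
  then show ?thesis using index_inj[OF k(2) j(1,2)] by simp
qed

lemma interior_predecessor:
  assumes k: "0 < k" "Suc k < length w" and arc: "(z, w ! k) \<in> A'"
  shows "z = w ! (k - 1)"
proof -
  have "(z, w ! k) \<in> path_arcs w" using arc arcs_within interior_notin[OF k] by auto
  then obtain j where j: "Suc j < length w" "z = w ! j" "w ! k = w ! Suc j"
    by (auto simp: path_arcs_nth)
  moreover have "Suc j \<noteq> length w - 1" using j(3) last_in interior_notin[OF k] by auto
  ultimately have "k = Suc j" using index_inj[OF k(2), of "Suc j"] by simp
  then show ?thesis using j(2) by simp
qed

lemma longest_path_through_new_vertex:
  assumes P: "longest_path V' A' P" and x: "x \<in> set P" "x \<in> set w" "x \<notin> VH"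
  shows "set w \<subseteq> set P"
proof -
  obtain k where k: "0 < k" "Suc k < length w" "w ! k = x"
    using new_vertex_interior x(2,3) by blast
  have arc: "(w ! j, w ! Suc j) \<in> A'" if "Suc j < length w" for j
    using that by (auto simp: path_arcs_nth)
  have "w ! j \<in> set P" if "j < length w" for j
  proof (rule propagate_from_interior[where Q = "\<lambda>j. w ! j \<in> set P" and k = k])
    fix j assume j: "0 < j" "Suc j < length w" "w ! j \<in> set P"
    show "w ! (j - 1) \<in> set P \<and> w ! Suc j \<in> set P"
    proof
      show "w ! (j - 1) \<in> set P"
      proof (rule longest_path_predecessor_mem[OF P j(3)])
        show "(w ! (j - 1), w ! j) \<in> A'" using arc[of "j - 1"] j(1,2) by simp
        show "w ! (j - 1) \<in> V'" using j(2) by simp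
      qed (rule interior_predecessor[OF j(1,2)])
      show "w ! Suc j \<in> set P"
      proof (rule longest_path_successor_mem[OF P j(3)])
        show "(w ! j, w ! Suc j) \<in> A'" using arc[of j] j(2) by simp
        show "w ! Suc j \<in> V'" using j(2) by simp
      qed (rule interior_successor[OF j(1,2)])
    qed
  qed (use k x that in auto)
  then show ?thesis by (auto simp: in_set_conv_nth)
qed

lemma longest_path_avoiding_new_vertices:
  assumes P: "longest_path V' A' P" and avoid: "set P \<inter> set w \<subseteq> VH"
  shows "longest_path VH AH P"
proof (rule longest_path_subgraph[OF P])
  have path: "is_path V' A' P" using P by (simp add: longest_path_def)
  then show PV: "set P \<subseteq> VH" using avoid by (auto simp: is_path_def)
  show "path_arcs P \<subseteq> AH"
  proof
    fix a assume a: "a \<in> path_arcs P"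
    then obtain u v where uv: "a = (u, v)" "u \<in> set P" "v \<in> set P"
      by (metis path_arcs_nth nth_mem Suc_lessD surj_pair)
    have "a \<in> A'" using a path by (auto simp: is_path_def)
    then show "a \<in> AH" using uv PV ear_arc_leaves[of u v] by blast
  qed
qed auto

lemma longest_path_meets_ear_or_transversal:
  assumes S: "lp_transversal VH AH S" and P: "longest_path V' A' P"
  shows "set w \<subseteq> set P \<or> set P \<inter> S \<noteq> {}"
proof (cases "set P \<inter> set w \<subseteq> VH")
  case True
  then show ?thesis
    using S longest_path_avoiding_new_vertices[OF P] by (auto simp: lp_transversal_def)
next
  case False
  then show ?thesis using longest_path_through_new_vertex[OF P] by blast
qed

lemma lp_transversal_extend:
  assumes S: "lp_transversal VH AH S"
  obtains S' where "lp_transversal V' A' S'"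
proof -
  have SV: "S \<subseteq> VH" and indep: "independent A' S"
    using S ear_arc_leaves by (auto simp: lp_transversal_def independent_def)
  show ?thesis
  proof (cases "set w \<inter> S = {}")
    case False
    then have "lp_transversal V' A' S"
      using SV indep longest_path_meets_ear_or_transversal[OF S] by (fastforce simp: lp_transversal_def)
    then show ?thesis by (rule that)
  next
    case True
    define x where "x = w ! 1"
    have interior: "0 < (1::nat)" "Suc 1 < length w" using length_walk by simp_all
    have "x \<in> set w" "x \<notin> VH"
      using interior interior_notin[OF interior] unfolding x_def by simp_all
    then have x: "x \<in> set w" "x \<notin> VH" "x \<notin> S" using True by blast+
    have "w ! 0 \<in> set w" "w ! 2 \<in> set w" using length_walk by (auto intro!: nth_mem)
    then have "(x, y) \<notin> A'" "(y, x) \<notin> A'" if "y \<in> S" for y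
      using interior_successor[OF interior, of y] interior_predecessor[OF interior, of y] True that
      unfolding x_def by (auto simp del: One_nat_def)
    then have "independent A' (insert x S)"
      using indep by (auto simp: independent_def)
    moreover have "set P \<inter> insert x S \<noteq> {}" if "longest_path V' A' P" for P
      using longest_path_meets_ear_or_transversal[OF S that] x by blast
    ultimately have "lp_transversal V' A' (insert x S)"
      using SV x by (auto simp: lp_transversal_def)
    then show ?thesis by (rule that)
  qed
qed

end

lemma lp_transversal_add_ear:
  assumes "AH \<subseteq> VH \<times> VH" "is_ear V A VH e" "2 \<le> ear_length e" "lp_transversal VH AH S"
  obtains S' where "lp_transversal (VH \<union> ear_verts e) (AH \<union> ear_arcs e) S'"
proof -
  obtain w where w: "ear_walk VH w" "set w = ear_verts e" "path_arcs w = ear_arcs e"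
    using ear_walk_of_ear assms(2,3) by metis
  interpret ear_extension VH AH w
    using assms(1) w(1) by unfold_locales
  show ?thesis
    using lp_transversal_extend[OF assms(4)] that w(2,3) by metis
qed

theorem mainTheorem2:
  fixes V :: "'a set" and A :: "('a \<times> 'a) set" and i :: nat
  assumes "i \<ge> 2"
    and "digraph V A"
    and "strong V A"
    and "in_LE i V A"
  shows "\<exists>S \<subseteq> V. independent A S \<and> (\<forall>p. longest_path V A p \<longrightarrow> set p \<inter> S \<noteq> {})"
proof -
  obtain Ds where ne: "Ds \<noteq> []" and last: "last Ds = (V, A)"
    and sub: "\<forall>j < length Ds. subdigraph (fst (Ds ! j)) (snd (Ds ! j)) V A"
    and start: "\<exists>c. is_cycle V A c \<and> Ds ! 0 = (set c, cycle_arcs c)"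
    and ears: "\<forall>j. Suc j < length Ds \<longrightarrow> (\<exists>e. is_ear V A (fst (Ds ! j)) e \<and> ear_length e \<ge> i \<and>
                 Ds ! Suc j = (fst (Ds ! j) \<union> ear_verts e, snd (Ds ! j) \<union> ear_arcs e))"
    using assms(4) unfolding in_LE_def by blast
  have "\<exists>S. lp_transversal (fst (Ds ! j)) (snd (Ds ! j)) S" if "j < length Ds" for j
    using that
  proof (induction j)
    case 0
    then show ?case using start lp_transversal_cycle by (fastforce simp: is_cycle_def)
  next
    case (Suc j)
    then obtain S where "lp_transversal (fst (Ds ! j)) (snd (Ds ! j)) S" by auto
    moreover obtain e where "is_ear V A (fst (Ds ! j)) e" "2 \<le> ear_length e"
        "Ds ! Suc j = (fst (Ds ! j) \<union> ear_verts e, snd (Ds ! j) \<union> ear_arcs e)"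
      using ears Suc.prems assms(1) by fastforce
    moreover have "snd (Ds ! j) \<subseteq> fst (Ds ! j) \<times> fst (Ds ! j)"
      using sub Suc.prems by (simp add: subdigraph_def)
    ultimately show ?case using lp_transversal_add_ear by (metis fst_conv snd_conv)
  qed
  from this[of "length Ds - 1"] show ?thesis
    using ne last by (auto simp: last_conv_nth lp_transversal_def)
qed

end
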